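(* Let $T$ be a ditree such that every source set of size at least $2$ and every sink set of size at least $2$ contains a leaf of $T$. Let $S\subseteq V(T)$ be the set of all sinks, all sources and all leaves of $T$. Then $S$ is a geodetic set of $T$ of minimum size.
   Context: All digraphs are finite, without loops or parallel arcs. The underlying undirected graph of a digraph is obtained by forgetting orientations and deleting parallel edges. A ditree is a digraph whose underlying undirected graph is a tree (it may contain $2$-cycles, i.e., pairs of opposite arcs $uv,vu$). A leaf is a vertex of degree $1$ in the underlying undirected graph. A source is a vertex with no in-neighbour; a sink is a vertex with no out-neighbour. For $S\subseteq V(D)$, $N^-(S)$ (resp. $N^+(S)$) is the set of vertices outside $S$ having an arc to (resp. from) some vertex of $S$. A source set is a maximal strongly connected component $S$ with $N^-(S)\setminus S=\emptyset$; a sink set is a maximal strongly connected component $S$ with $N^+(S)\setminus S=\emptyset$. For vertices $u,v$, $I(u,v)$ is the set of vertices on some shortest directed path from $u$ to $v$; for $S\subseteq V(D)$, $I(S)=\bigcup_{u,v\in S}(I(u,v)\cup I(v,u))$. A geodetic set is a set $S$ with $I(S)=V(D)$. *)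

theory Defs
  imports Main
begin

definition digraph :: "'a set \<Rightarrow> ('a \<times> 'a) set \<Rightarrow> bool" where
  "digraph V A \<longleftrightarrow> finite V \<and> A \<subseteq> V \<times> V \<and> (\<forall>v. (v, v) \<notin> A)"

definition uadj :: "('a \<times> 'a) set \<Rightarrow> 'a \<Rightarrow> 'a \<Rightarrow> bool" where
  "uadj A u v \<longleftrightarrow> (u, v) \<in> A \<or> (v, u) \<in> A"

definition uconnected :: "'a set \<Rightarrow> ('a \<times> 'a) set \<Rightarrow> bool" where
  "uconnected V A \<longleftrightarrow> V \<noteq> {} \<and>
     (\<forall>u\<in>V. \<forall>v\<in>V. (u, v) \<in> {(x, y). uadj A x y}\<^sup>*)"

definition ucycle :: "('a \<times> 'a) set \<Rightarrow> 'a list \<Rightarrow> bool" where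
  "ucycle A cs \<longleftrightarrow> length cs \<ge> 3 \<and> distinct cs \<and>
     (\<forall>i. Suc i < length cs \<longrightarrow> uadj A (cs ! i) (cs ! Suc i)) \<and>
     uadj A (last cs) (hd cs)"

definition ditree :: "'a set \<Rightarrow> ('a \<times> 'a) set \<Rightarrow> bool" where
  "ditree V A \<longleftrightarrow> digraph V A \<and> uconnected V A \<and> (\<nexists>cs. ucycle A cs)"

definition udegree :: "'a set \<Rightarrow> ('a \<times> 'a) set \<Rightarrow> 'a \<Rightarrow> nat" where
  "udegree V A v = card {w \<in> V. uadj A v w}"

definition leaf :: "'a set \<Rightarrow> ('a \<times> 'a) set \<Rightarrow> 'a \<Rightarrow> bool" where
  "leaf V A v \<longleftrightarrow> v \<in> V \<and> udegree V A v = 1"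

definition source :: "'a set \<Rightarrow> ('a \<times> 'a) set \<Rightarrow> 'a \<Rightarrow> bool" where
  "source V A v \<longleftrightarrow> v \<in> V \<and> (\<nexists>u. (u, v) \<in> A)"

definition sink :: "'a set \<Rightarrow> ('a \<times> 'a) set \<Rightarrow> 'a \<Rightarrow> bool" where
  "sink V A v \<longleftrightarrow> v \<in> V \<and> (\<nexists>w. (v, w) \<in> A)"

definition in_nbh :: "('a \<times> 'a) set \<Rightarrow> 'a set \<Rightarrow> 'a set" where
  "in_nbh A S = {u. u \<notin> S \<and> (\<exists>s\<in>S. (u, s) \<in> A)}"

definition out_nbh :: "('a \<times> 'a) set \<Rightarrow> 'a set \<Rightarrow> 'a set" where
  "out_nbh A S = {u. u \<notin> S \<and> (\<exists>s\<in>S. (s, u) \<in> A)}"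

definition strongly_connected :: "'a set \<Rightarrow> ('a \<times> 'a) set \<Rightarrow> 'a set \<Rightarrow> bool" where
  "strongly_connected V A S \<longleftrightarrow> S \<noteq> {} \<and> S \<subseteq> V \<and>
     (\<forall>u\<in>S. \<forall>v\<in>S. (u, v) \<in> (A \<inter> (S \<times> S))\<^sup>*)"

definition max_scc :: "'a set \<Rightarrow> ('a \<times> 'a) set \<Rightarrow> 'a set \<Rightarrow> bool" where
  "max_scc V A S \<longleftrightarrow> strongly_connected V A S \<and>
     (\<forall>S'. S \<subseteq> S' \<and> strongly_connected V A S' \<longrightarrow> S' = S)"

definition source_set :: "'a set \<Rightarrow> ('a \<times> 'a) set \<Rightarrow> 'a set \<Rightarrow> bool" where
  "source_set V A S \<longleftrightarrow> max_scc V A S \<and> in_nbh A S - S = {}"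

definition sink_set :: "'a set \<Rightarrow> ('a \<times> 'a) set \<Rightarrow> 'a set \<Rightarrow> bool" where
  "sink_set V A S \<longleftrightarrow> max_scc V A S \<and> out_nbh A S - S = {}"

definition dwalk :: "('a \<times> 'a) set \<Rightarrow> 'a list \<Rightarrow> bool" where
  "dwalk A xs \<longleftrightarrow> xs \<noteq> [] \<and> (\<forall>i. Suc i < length xs \<longrightarrow> (xs ! i, xs ! Suc i) \<in> A)"

definition dpath :: "('a \<times> 'a) set \<Rightarrow> 'a list \<Rightarrow> bool" where
  "dpath A xs \<longleftrightarrow> dwalk A xs \<and> distinct xs"

definition shortest_path :: "('a \<times> 'a) set \<Rightarrow> 'a \<Rightarrow> 'a \<Rightarrow> 'a list \<Rightarrow> bool" where
  "shortest_path A u v xs \<longleftrightarrow> dpath A xs \<and> hd xs = u \<and> last xs = v \<and>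
     (\<forall>ys. dpath A ys \<and> hd ys = u \<and> last ys = v \<longrightarrow> length xs \<le> length ys)"

definition interval :: "('a \<times> 'a) set \<Rightarrow> 'a \<Rightarrow> 'a \<Rightarrow> 'a set" where
  "interval A u v = {w. \<exists>xs. shortest_path A u v xs \<and> w \<in> set xs}"

definition interval_set :: "('a \<times> 'a) set \<Rightarrow> 'a set \<Rightarrow> 'a set" where
  "interval_set A S = (\<Union>u\<in>S. \<Union>v\<in>S. interval A u v \<union> interval A v u)"

definition geodetic :: "'a set \<Rightarrow> ('a \<times> 'a) set \<Rightarrow> 'a set \<Rightarrow> bool" where
  "geodetic V A S \<longleftrightarrow> S \<subseteq> V \<and> interval_set A S = V"

end

theory Submission
  imports Defs
begin

text \<open>A vertex in the interior of a shortest path has an in-arc and an out-arc to two distinct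
  neighbours, so it is neither a source, a sink nor a leaf; hence every geodetic set contains all
  such extreme vertices. Conversely, let w be any other vertex and consider the branches of T at
  w, the components of T - w. The hypothesis on source and sink sets provides a branch containing
  a source or a leaf from which w is reachable, and a different branch containing a sink or a leaf
  reachable from w. As T is a tree, a shortest path between the two passes through w.\<close>

lemma dwalk_Cons_Cons: "dwalk R (a # b # xs) \<longleftrightarrow> (a, b) \<in> R \<and> dwalk R (b # xs)"
  by (auto simp: dwalk_def nth_Cons less_Suc_eq_0_disj split: nat.splits)

lemma dwalk_singleton [simp]: "dwalk R [a]"
  by (simp add: dwalk_def)

lemma dwalk_ConsD: "dwalk R (a # xs) \<Longrightarrow> xs \<noteq> [] \<Longrightarrow> dwalk R xs"
  by (cases xs) (auto simp: dwalk_Cons_Cons)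

lemma dwalk_appendD: "dwalk R (ys @ zs) \<Longrightarrow> zs \<noteq> [] \<Longrightarrow> dwalk R zs"
  by (induction ys) (auto dest: dwalk_ConsD)

lemma dwalk_snoc: "dwalk R xs \<Longrightarrow> (last xs, q) \<in> R \<Longrightarrow> dwalk R (xs @ [q])"
  by (induction xs rule: induct_list012) (auto simp: dwalk_Cons_Cons)

lemma dwalk_mono: "dwalk R xs \<Longrightarrow> R \<subseteq> R' \<Longrightarrow> dwalk R' xs"
  by (auto simp: dwalk_def)

lemma dwalk_Restr: "dwalk R xs \<Longrightarrow> dwalk (R \<inter> set xs \<times> set xs) xs"
  by (auto simp: dwalk_def)

lemma dwalk_rtrancl: "dwalk R xs \<Longrightarrow> (hd xs, last xs) \<in> R\<^sup>*"
proof (induction xs rule: induct_list012)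
  case (3 x y zs)
  then show ?case by (auto simp: dwalk_Cons_Cons intro: converse_rtrancl_into_rtrancl)
qed (simp_all add: dwalk_def)

lemma dwalk_set_Field: "dwalk R xs \<Longrightarrow> 2 \<le> length xs \<Longrightarrow> set xs \<subseteq> Field R"
proof (induction xs rule: induct_list012)
  case (3 x y zs)
  then show ?case by (cases zs) (auto simp: dwalk_Cons_Cons intro: FieldI1 FieldI2)
qed simp_all

lemma dwalk_interior_arcs:
  assumes "dwalk R (ys @ w # zs)" "ys \<noteq> []" "zs \<noteq> []"
  shows "(last ys, w) \<in> R" "(w, hd zs) \<in> R"
proof -
  have "ys @ w # zs = butlast ys @ last ys # w # hd zs # tl zs"
    using assms(2,3) by simp
  then have "dwalk R (butlast ys @ last ys # w # hd zs # tl zs)"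
    using assms(1) by metis
  then have "dwalk R (last ys # w # hd zs # tl zs)"
    by (rule dwalk_appendD) simp
  then show "(last ys, w) \<in> R" "(w, hd zs) \<in> R"
    by (simp_all add: dwalk_Cons_Cons)
qed

lemma rtrancl_imp_dpath: "(u, v) \<in> R\<^sup>* \<Longrightarrow> \<exists>xs. dpath R xs \<and> hd xs = u \<and> last xs = v"
proof (induction rule: converse_rtrancl_induct)
  case base
  show ?case by (rule exI[of _ "[v]"]) (simp add: dpath_def)
next
  case (step u u')
  then obtain xs where xs: "dpath R xs" "hd xs = u'" "last xs = v" by blast
  show ?case
  proof (cases "u \<in> set xs")
    case True
    then obtain ys zs where xs_split: "xs = ys @ u # zs" by (meson split_list)
    then have "dpath R (u # zs)" using xs(1) by (auto simp: dpath_def dest: dwalk_appendD)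
    then show ?thesis using xs(3) xs_split by (intro exI[of _ "u # zs"]) simp
  next
    case False
    obtain ys where "xs = u' # ys" using xs(1,2) by (cases xs) (auto simp: dpath_def dwalk_def)
    then have "dpath R (u # xs)" using False xs(1) step(1) by (auto simp: dpath_def dwalk_Cons_Cons)
    then show ?thesis using xs(3) \<open>xs = u' # ys\<close> by (intro exI[of _ "u # xs"]) simp
  qed
qed

lemma shortest_path_exists: "(u, v) \<in> A\<^sup>* \<Longrightarrow> \<exists>xs. shortest_path A u v xs"
  using rtrancl_imp_dpath[of u v A]
    ex_has_least_nat[of "\<lambda>xs. dpath A xs \<and> hd xs = u \<and> last xs = v" _ length]
  unfolding shortest_path_def by metis

lemma interval_refl: "w \<in> interval A w w"
proof -
  have "shortest_path A w w [w]"
    by (auto simp: shortest_path_def dpath_def Suc_le_eq dwalk_def)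
  then show ?thesis by (force simp: interval_def)
qed

lemma interval_subset:
  assumes "digraph V A" "u \<in> V"
  shows "interval A u v \<subseteq> V"
proof
  fix x assume "x \<in> interval A u v"
  then obtain xs where xs: "shortest_path A u v xs" "x \<in> set xs" by (auto simp: interval_def)
  then have "dwalk A xs" "hd xs = u" by (auto simp: shortest_path_def dpath_def)
  show "x \<in> V"
  proof (cases "2 \<le> length xs")
    case True
    then have "x \<in> Field A" using dwalk_set_Field[OF \<open>dwalk A xs\<close>] xs(2) by blast
    then show ?thesis using assms(1) by (auto simp: Field_def digraph_def)
  next
    case False
    then have "xs = [u]"
      using \<open>dwalk A xs\<close> \<open>hd xs = u\<close> by (cases xs) (auto simp: dwalk_def Suc_le_eq)
    then show ?thesis using xs(2) assms(2) by simp
  qed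
qed

lemma leaf_neighbour_unique:
  assumes "digraph V A" "leaf V A w" "uadj A w a" "uadj A w b"
  shows "a = b"
proof -
  have "finite V" "a \<in> V" "b \<in> V"
    using assms(1,3,4) by (auto simp: digraph_def uadj_def)
  then have "card {a, b} \<le> udegree V A w"
    unfolding udegree_def using assms(3,4) by (intro card_mono) auto
  then show ?thesis using assms(2) by (auto simp: leaf_def card_insert_if split: if_splits)
qed

definition extreme_vertices :: "'a set \<Rightarrow> ('a \<times> 'a) set \<Rightarrow> 'a set" where
  "extreme_vertices V A = {v \<in> V. sink V A v \<or> source V A v \<or> leaf V A v}"

lemma interval_interior_not_extreme:
  assumes "digraph V A" "w \<in> interval A u v" "w \<noteq> u" "w \<noteq> v"
  shows "w \<notin> extreme_vertices V A"
proof -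
  obtain xs where xs: "shortest_path A u v xs" "w \<in> set xs"
    using assms(2) by (auto simp: interval_def)
  then obtain ys zs where split: "xs = ys @ w # zs" by (meson split_list)
  have "ys \<noteq> []" "zs \<noteq> []"
    using xs(1) assms(3,4) by (auto simp: split shortest_path_def)
  then have arcs: "(last ys, w) \<in> A" "(w, hd zs) \<in> A"
    using dwalk_interior_arcs[of A ys w zs] xs(1) by (auto simp: split shortest_path_def dpath_def)
  have "last ys \<in> set ys" "hd zs \<in> set zs"
    using \<open>ys \<noteq> []\<close> \<open>zs \<noteq> []\<close> by simp_all
  then have "last ys \<noteq> hd zs"
    using xs(1) by (auto simp: split shortest_path_def dpath_def)
  then have "\<not> leaf V A w"
    using leaf_neighbour_unique[OF assms(1)] arcs by (metis uadj_def)
  then show ?thesis using arcs by (auto simp: extreme_vertices_def source_def sink_def)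
qed

lemma geodetic_contains_extreme_vertices:
  assumes "digraph V A" "geodetic V A S"
  shows "extreme_vertices V A \<subseteq> S"
proof
  fix w assume w: "w \<in> extreme_vertices V A"
  then have "w \<in> interval_set A S"
    using assms(2) by (auto simp: geodetic_def extreme_vertices_def)
  then obtain u v where "u \<in> S" "v \<in> S" "w \<in> interval A u v"
    unfolding interval_set_def by blast
  then show "w \<in> S" using interval_interior_not_extreme[OF assms(1)] w by blast
qed

lemma uadj_sym: "uadj A x y \<longleftrightarrow> uadj A y x"
  by (auto simp: uadj_def)

lemma uadj_converse [simp]: "uadj (A\<inverse>) = uadj A"
  by (auto simp: uadj_def fun_eq_iff)

lemma ditree_converse [simp]: "ditree V (A\<inverse>) \<longleftrightarrow> ditree V A"
  unfolding ditree_def digraph_def uconnected_def ucycle_def by auto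

lemma leaf_converse [simp]: "leaf V (A\<inverse>) = leaf V A"
  by (simp add: fun_eq_iff leaf_def udegree_def)

lemma source_converse [simp]: "source V (A\<inverse>) = sink V A"
  by (auto simp: fun_eq_iff source_def sink_def)

lemma strongly_connected_converse [simp]:
  "strongly_connected V (A\<inverse>) Z \<longleftrightarrow> strongly_connected V A Z"
proof -
  have "A\<inverse> \<inter> Z \<times> Z = (A \<inter> Z \<times> Z)\<inverse>" by auto
  then show ?thesis unfolding strongly_connected_def by (auto simp: rtrancl_converse)
qed

lemma source_set_converse [simp]: "source_set V (A\<inverse>) Z \<longleftrightarrow> sink_set V A Z"
  unfolding source_set_def sink_set_def max_scc_def in_nbh_def out_nbh_def by auto

section \<open>Initial strong components\<close>

definition pred_closed :: "('a \<times> 'a) set \<Rightarrow> 'a set \<Rightarrow> bool" where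
  "pred_closed R Z \<longleftrightarrow> (\<forall>a b. (a, b) \<in> R \<longrightarrow> b \<in> Z \<longrightarrow> a \<in> Z)"

lemma pred_closed_rtrancl:
  assumes "pred_closed R Z" "(a, b) \<in> R\<^sup>*" "b \<in> Z"
  shows "a \<in> Z"
  using assms(2,3)
  by (induction rule: converse_rtrancl_induct) (use assms(1) in \<open>auto simp: pred_closed_def\<close>)

lemma pred_closed_rtrancl_restrict:
  assumes "pred_closed R Z" "(a, b) \<in> R\<^sup>*" "b \<in> Z"
  shows "(a, b) \<in> (R \<inter> Z \<times> Z)\<^sup>*"
  using assms(2,3)
proof (induction rule: converse_rtrancl_induct)
  case (step y z)
  then have "z \<in> Z" "y \<in> Z" using pred_closed_rtrancl[OF assms(1)] assms(1)
    by (auto simp: pred_closed_def)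
  with step show ?case by (auto intro: converse_rtrancl_into_rtrancl)
qed simp

text \<open>An initial strong component above x: the ancestor set of an ancestor z of x whose
  own ancestor set is as small as possible.\<close>

lemma exists_initial_scc:
  assumes "finite F" "R \<subseteq> F \<times> F" "x \<in> F"
  obtains Z where "Z \<noteq> {}" "Z \<subseteq> F" "\<forall>y\<in>Z. (y, x) \<in> R\<^sup>*" "pred_closed R Z"
    "\<forall>y\<in>Z. \<forall>y'\<in>Z. (y, y') \<in> (R \<inter> Z \<times> Z)\<^sup>*"
proof -
  define anc where "anc y = {a. (a, y) \<in> R\<^sup>*}" for y
  have anc_subset: "anc y \<subseteq> insert y F" for y
  proof
    fix a assume "a \<in> anc y"
    then have "(a, y) \<in> R\<^sup>*" by (simp add: anc_def)
    then show "a \<in> insert y F" using assms(2) by (cases rule: converse_rtranclE) auto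
  qed
  then have finite_anc: "finite (anc y)" for y
    using assms(1) finite_subset by blast
  have "x \<in> anc x" by (simp add: anc_def)
  then obtain z where z: "z \<in> anc x" and z_min: "\<And>y. y \<in> anc x \<Longrightarrow> card (anc z) \<le> card (anc y)"
    using ex_has_least_nat[of "\<lambda>y. y \<in> anc x" x "\<lambda>y. card (anc y)"] by blast
  have closed: "pred_closed R (anc z)"
    by (auto simp: pred_closed_def anc_def intro: converse_rtrancl_into_rtrancl)
  have z_reaches: "(z, y) \<in> R\<^sup>*" if "y \<in> anc z" for y
  proof -
    have sub: "anc y \<subseteq> anc z" using that rtrancl_trans[of _ y R z] by (auto simp: anc_def)
    have "y \<in> anc x" using that z rtrancl_trans[of y z R x] by (simp add: anc_def)
    then have "card (anc z) \<le> card (anc y)" by (rule z_min)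
    then have "card (anc y) = card (anc z)" using card_mono[OF finite_anc sub] by linarith
    then have "anc y = anc z" by (rule card_subset_eq[OF finite_anc sub])
    moreover have "z \<in> anc z" by (simp add: anc_def)
    ultimately show ?thesis by (metis anc_def mem_Collect_eq)
  qed
  show ?thesis
  proof
    show "pred_closed R (anc z)" by (fact closed)
    show "anc z \<noteq> {}" by (auto simp: anc_def)
    show "anc z \<subseteq> F" using anc_subset[of z] anc_subset[of x] z assms(3) by auto
    show "\<forall>y\<in>anc z. (y, x) \<in> R\<^sup>*" using z rtrancl_trans[of _ z R x] by (auto simp: anc_def)
    show "\<forall>y\<in>anc z. \<forall>y'\<in>anc z. (y, y') \<in> (R \<inter> anc z \<times> anc z)\<^sup>*"
    proof (intro ballI)
      fix y y' assume "y \<in> anc z" "y' \<in> anc z"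
      then have "(y, y') \<in> R\<^sup>*"
        using z_reaches rtrancl_trans[of y z R y'] by (simp add: anc_def)
      then show "(y, y') \<in> (R \<inter> anc z \<times> anc z)\<^sup>*"
        using pred_closed_rtrancl_restrict[OF closed] \<open>y' \<in> anc z\<close> by blast
    qed
  qed
qed

lemma pred_closed_scc_is_source_set:
  assumes "strongly_connected V A Z" "pred_closed A Z"
  shows "source_set V A Z"
proof -
  have "S' = Z" if "Z \<subseteq> S'" "strongly_connected V A S'" for S'
  proof
    obtain z where "z \<in> Z" using assms(1) by (auto simp: strongly_connected_def)
    show "S' \<subseteq> Z"
    proof
      fix s assume "s \<in> S'"
      then have "(s, z) \<in> (A \<inter> S' \<times> S')\<^sup>*"
        using that \<open>z \<in> Z\<close> by (auto simp: strongly_connected_def)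
      then have "(s, z) \<in> A\<^sup>*" using rtrancl_mono[of "A \<inter> S' \<times> S'" A] by blast
      then show "s \<in> Z" using pred_closed_rtrancl[OF assms(2)] \<open>z \<in> Z\<close> by blast
    qed
  qed (use that in simp)
  moreover have "in_nbh A Z = {}"
    using assms(2) by (auto simp: in_nbh_def pred_closed_def)
  ultimately show ?thesis using assms(1) by (auto simp: source_set_def max_scc_def)
qed

definition source_sets_have_leaves :: "'a set \<Rightarrow> ('a \<times> 'a) set \<Rightarrow> bool" where
  "source_sets_have_leaves V A \<longleftrightarrow> (\<forall>X. source_set V A X \<and> 2 \<le> card X \<longrightarrow> (\<exists>v\<in>X. leaf V A v))"

lemma source_set_has_source_or_leaf:
  assumes "digraph V A" "source_sets_have_leaves V A" "source_set V A Z"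
  shows "\<exists>u\<in>Z. source V A u \<or> leaf V A u"
proof (cases "2 \<le> card Z")
  case True
  then show ?thesis using assms(2,3) by (auto simp: source_sets_have_leaves_def)
next
  case False
  have "Z \<subseteq> V" "Z \<noteq> {}"
    using assms(3) by (auto simp: source_set_def max_scc_def strongly_connected_def)
  moreover have "finite V" using assms(1) by (simp add: digraph_def)
  ultimately have "0 < card Z" using finite_subset card_gt_0_iff by blast
  then have "card Z = 1" using False by linarith
  then obtain z where Z: "Z = {z}" by (rule card_1_singletonE)
  have "in_nbh A Z = {}" using assms(3) by (auto simp: source_set_def in_nbh_def)
  moreover have "(z, z) \<notin> A" using assms(1) by (simp add: digraph_def)
  ultimately have "(a, z) \<notin> A" for a
    using Z by (cases "a = z") (auto simp: in_nbh_def)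
  then have "source V A z" using \<open>Z \<subseteq> V\<close> Z by (auto simp: source_def)
  then show ?thesis using Z by blast
qed

section \<open>Branches of a ditree at a vertex\<close>

abbreviation uedges :: "('a \<times> 'a) set \<Rightarrow> ('a \<times> 'a) set" where
  "uedges A \<equiv> {(x, y). uadj A x y}"

lemma ucycle_iff_dwalk:
  "ucycle A cs \<longleftrightarrow> 3 \<le> length cs \<and> distinct cs \<and> dwalk (uedges A) cs \<and>
     uadj A (last cs) (hd cs)"
  by (auto simp: ucycle_def dwalk_def)

definition avoiding_edges :: "('a \<times> 'a) set \<Rightarrow> 'a \<Rightarrow> ('a \<times> 'a) set" where
  "avoiding_edges A w = {(x, y). uadj A x y \<and> x \<noteq> w \<and> y \<noteq> w}"

definition branch :: "('a \<times> 'a) set \<Rightarrow> 'a \<Rightarrow> 'a \<Rightarrow> 'a set" where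
  "branch A w n = {y. (n, y) \<in> (avoiding_edges A w)\<^sup>*}"

lemma branch_converse [simp]: "branch (A\<inverse>) w n = branch A w n"
  by (simp add: branch_def avoiding_edges_def)

lemma branch_self: "n \<in> branch A w n"
  by (simp add: branch_def)

lemma avoiding_edges_rtrancl_sym: "(x, y) \<in> (avoiding_edges A w)\<^sup>* \<Longrightarrow> (y, x) \<in> (avoiding_edges A w)\<^sup>*"
proof -
  have "(avoiding_edges A w)\<inverse> = avoiding_edges A w"
    by (auto simp: avoiding_edges_def uadj_def)
  then show "(x, y) \<in> (avoiding_edges A w)\<^sup>* \<Longrightarrow> (y, x) \<in> (avoiding_edges A w)\<^sup>*"
    by (metis converse_iff rtrancl_converse)
qed

lemma branch_not_center:
  assumes "digraph V A" "uadj A w n" "y \<in> branch A w n"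
  shows "y \<noteq> w"
proof -
  have "(n, y) \<in> (avoiding_edges A w)\<^sup>*" using assms(3) by (simp add: branch_def)
  then show ?thesis
  proof (cases rule: rtranclE)
    case base
    then show ?thesis using assms(1,2) by (auto simp: digraph_def uadj_def)
  qed (simp add: avoiding_edges_def)
qed

lemma branch_closed:
  assumes "digraph V A" "uadj A w n" "y \<in> branch A w n" "uadj A y y'" "y' \<noteq> w"
  shows "y' \<in> branch A w n"
proof -
  have "(y, y') \<in> avoiding_edges A w"
    using branch_not_center[OF assms(1-3)] assms(4,5) by (simp add: avoiding_edges_def)
  then show ?thesis using assms(3) by (auto simp: branch_def intro: rtrancl_into_rtrancl)
qed

lemma branch_subset:
  assumes "digraph V A" "uadj A w n"
  shows "branch A w n \<subseteq> V"
proof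
  fix y assume "y \<in> branch A w n"
  then have "(n, y) \<in> (avoiding_edges A w)\<^sup>*" by (simp add: branch_def)
  then show "y \<in> V"
    by (cases rule: rtranclE) (use assms in \<open>auto simp: avoiding_edges_def digraph_def uadj_def\<close>)
qed

text \<open>Two branches sharing a vertex would give a path between their roots avoiding w, which
  closes a cycle through w.\<close>

lemma branch_disjoint:
  assumes "ditree V A" "uadj A w n1" "uadj A w n2" "y \<in> branch A w n1" "y \<in> branch A w n2"
  shows "n1 = n2"
proof (rule ccontr)
  assume "n1 \<noteq> n2"
  have "(n1, n2) \<in> (avoiding_edges A w)\<^sup>*"
    using assms(4,5) avoiding_edges_rtrancl_sym rtrancl_trans by (fastforce simp: branch_def)
  then obtain xs where xs: "dpath (avoiding_edges A w) xs" "hd xs = n1" "last xs = n2"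
    using rtrancl_imp_dpath by metis
  then obtain ys where ys: "xs = n1 # ys"
    by (cases xs) (auto simp: dpath_def dwalk_def)
  then have "ys \<noteq> []" using xs(3) \<open>n1 \<noteq> n2\<close> by auto
  have "w \<notin> Field (avoiding_edges A w)"
    by (auto simp: avoiding_edges_def Field_def)
  moreover have "set xs \<subseteq> Field (avoiding_edges A w)"
    using xs(1) ys \<open>ys \<noteq> []\<close> dwalk_set_Field[of "avoiding_edges A w" xs]
    by (simp add: dpath_def Suc_le_eq)
  ultimately have "w \<notin> set xs" by blast
  moreover have "dwalk (uedges A) xs"
    using xs(1) by (auto simp: dpath_def avoiding_edges_def elim: dwalk_mono)
  ultimately have "ucycle A (w # xs)"
    using xs ys \<open>ys \<noteq> []\<close> assms(2,3)
    by (auto simp: ucycle_iff_dwalk dpath_def dwalk_Cons_Cons uadj_sym Suc_le_eq)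
  then show False using assms(1) by (simp add: ditree_def)
qed

lemma branch_cover:
  assumes "ditree V A" "w \<in> V" "y \<in> V" "y \<noteq> w"
  shows "\<exists>n. uadj A w n \<and> y \<in> branch A w n"
proof -
  have "(w, y) \<in> (uedges A)\<^sup>*"
    using assms(1-3) by (auto simp: ditree_def uconnected_def)
  then have "y = w \<or> (\<exists>n. uadj A w n \<and> y \<in> branch A w n)"
  proof (induction rule: rtrancl_induct)
    case (step y z)
    show ?case
    proof (cases "y = w \<or> z = w")
      case True
      then show ?thesis using step(2) by (auto intro: branch_self)
    next
      case False
      then have "(y, z) \<in> avoiding_edges A w" using step(2) by (simp add: avoiding_edges_def)
      then show ?thesis
        using step(3) False by (auto simp: branch_def intro: rtrancl_into_rtrancl)
    qed
  qed simp
  then show ?thesis using assms(4) by blast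
qed

lemma branch_boundary:
  assumes "ditree V A" "uadj A w n" "x \<in> branch A w n" "uadj A x y" "y \<notin> branch A w n"
  shows "y = w \<and> x = n"
proof -
  have "digraph V A" using assms(1) by (simp add: ditree_def)
  then have "y = w" using branch_closed assms(2-5) by metis
  then have "uadj A w x" using assms(4) uadj_sym by metis
  then have "x = n" using branch_disjoint[OF assms(1) _ assms(2) branch_self assms(3)] by blast
  with \<open>y = w\<close> show ?thesis by simp
qed

lemma dwalk_leaving_branch:
  assumes "digraph V A" "uadj A w n"
  shows "dwalk A xs \<Longrightarrow> hd xs \<in> branch A w n \<Longrightarrow> last xs \<notin> branch A w n \<Longrightarrow> w \<in> set xs"
proof (induction xs rule: induct_list012)
  case (3 x y zs)
  show ?case
  proof (cases "y \<in> branch A w n")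
    case True
    then show ?thesis using 3 by (simp add: dwalk_Cons_Cons)
  next
    case False
    have "uadj A x y" using "3.prems"(1) by (simp add: dwalk_Cons_Cons uadj_def)
    then have "y = w" using branch_closed[OF assms] "3.prems"(2) False by auto
    then show ?thesis by simp
  qed
qed (simp_all add: dwalk_def)

text \<open>A second neighbour of the last vertex lies on the path and would close a cycle.\<close>

lemma maximal_upath_ends_in_leaf:
  assumes "ditree V A" "dpath (uedges A) xs" "2 \<le> length xs"
    and maximal: "\<And>q. uadj A (last xs) q \<Longrightarrow> q \<in> set xs"
  shows "leaf V A (last xs)"
proof -
  have dg: "digraph V A" using assms(1) by (simp add: ditree_def)
  obtain ys p l where xs: "xs = ys @ [p, l]"
  proof -
    obtain k where "length xs = Suc (Suc k)" using assms(3) by (metis add_2_eq_Suc le_Suc_ex)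
    then show ?thesis using that by (auto simp: length_Suc_conv_rev)
  qed
  have "dwalk (uedges A) [p, l]"
    using assms(2) dwalk_appendD[of _ ys "[p, l]"] by (simp add: xs dpath_def)
  then have pl: "uadj A l p" by (simp add: dwalk_Cons_Cons uadj_sym)
  have "q = p" if "uadj A l q" for q
  proof (rule ccontr)
    assume "q \<noteq> p"
    moreover have "q \<noteq> l" using that dg by (auto simp: digraph_def uadj_def)
    ultimately have "q \<in> set ys" using maximal[of q] that by (simp add: xs)
    then obtain ys1 ys2 where ys: "ys = ys1 @ q # ys2" by (meson split_list)
    have "dwalk (uedges A) (q # ys2 @ [p, l])"
      using assms(2) dwalk_appendD[of _ ys1 "q # ys2 @ [p, l]"] by (simp add: xs ys dpath_def)
    then have "ucycle A (q # ys2 @ [p, l])"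
      using assms(2) that by (auto simp: ucycle_iff_dwalk xs ys dpath_def uadj_sym)
    then show False using assms(1) by (simp add: ditree_def)
  qed
  moreover have "l \<in> V" "p \<in> V" using pl dg by (auto simp: digraph_def uadj_def)
  ultimately have "{y \<in> V. uadj A l y} = {p}" using pl by blast
  then show ?thesis using \<open>l \<in> V\<close> by (simp add: leaf_def udegree_def xs)
qed

lemma branch_has_leaf:
  assumes "ditree V A" "uadj A w m"
  shows "\<exists>l\<in>branch A w m. leaf V A l"
proof -
  have dg: "digraph V A" using assms(1) by (simp add: ditree_def)
  define P where "P rest \<longleftrightarrow> dpath (uedges A) (w # m # rest)" for rest
  have "P []"
    using assms(2) dg by (auto simp: P_def dpath_def digraph_def uadj_def dwalk_Cons_Cons)
  moreover have "length rest < card V" if "P rest" for rest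
  proof -
    have "set (w # m # rest) \<subseteq> Field (uedges A)"
      using that dwalk_set_Field[of "uedges A" "w # m # rest"] by (simp add: P_def dpath_def)
    also have "Field (uedges A) \<subseteq> V" using dg by (auto simp: Field_def digraph_def uadj_def)
    finally have "card (set (w # m # rest)) \<le> card V"
      using dg by (intro card_mono) (auto simp: digraph_def)
    then show ?thesis using that by (simp add: P_def dpath_def distinct_card)
  qed
  ultimately obtain rest where rest: "P rest" and longest: "\<And>r. P r \<Longrightarrow> length r \<le> length rest"
    using ex_has_greatest_nat[of P "[]" length "card V"] by blast
  define xs where "xs = w # m # rest"
  have maximal: "uadj A (last xs) q \<Longrightarrow> q \<in> set xs" for q
  proof (rule ccontr)
    assume "uadj A (last xs) q" "q \<notin> set xs"
    then have "P (rest @ [q])"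
      using rest dwalk_snoc[of "uedges A" xs q] by (auto simp: P_def xs_def dpath_def)
    then show False using longest by fastforce
  qed
  moreover have "dpath (uedges A) xs" "2 \<le> length xs" using rest by (simp_all add: P_def xs_def)
  ultimately have "leaf V A (last xs)"
    using maximal_upath_ends_in_leaf[OF assms(1)] by blast
  have "dwalk (uedges A) (m # rest)" "w \<notin> set (m # rest)"
    using rest by (auto simp: P_def dpath_def dwalk_Cons_Cons)
  moreover have "uedges A \<inter> set (m # rest) \<times> set (m # rest) \<subseteq> avoiding_edges A w"
    using \<open>w \<notin> set (m # rest)\<close> by (auto simp: avoiding_edges_def)
  ultimately have "dwalk (avoiding_edges A w) (m # rest)"
    using dwalk_Restr dwalk_mono by blast
  then have "(m, last (m # rest)) \<in> (avoiding_edges A w)\<^sup>*"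
    using dwalk_rtrancl by fastforce
  then have "last xs \<in> branch A w m" by (simp add: branch_def xs_def)
  with \<open>leaf V A (last xs)\<close> show ?thesis by blast
qed

section \<open>Branches feeding a vertex\<close>

definition branch_feeds :: "'a set \<Rightarrow> ('a \<times> 'a) set \<Rightarrow> 'a \<Rightarrow> 'a \<Rightarrow> bool" where
  "branch_feeds V A w n \<longleftrightarrow> (\<exists>u\<in>branch A w n. (source V A u \<or> leaf V A u) \<and> (u, w) \<in> A\<^sup>*)"

lemma branch_feeds_converse:
  "branch_feeds V (A\<inverse>) w n \<longleftrightarrow> (\<exists>v\<in>branch A w n. (sink V A v \<or> leaf V A v) \<and> (w, v) \<in> A\<^sup>*)"
  by (simp add: branch_feeds_def rtrancl_converse)

lemma exists_branch_feeds:
  assumes "ditree V A" "source_sets_have_leaves V A"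
    and "w \<in> V" "\<not> source V A w" "\<not> leaf V A w"
  shows "\<exists>n. uadj A w n \<and> branch_feeds V A w n"
proof -
  have dg: "digraph V A" using assms(1) by (simp add: ditree_def)
  then have "finite V" "A \<subseteq> V \<times> V" by (auto simp: digraph_def)
  then obtain Z where Z: "Z \<noteq> {}" "Z \<subseteq> V" "\<forall>y\<in>Z. (y, w) \<in> A\<^sup>*" "pred_closed A Z"
    "\<forall>y\<in>Z. \<forall>y'\<in>Z. (y, y') \<in> (A \<inter> Z \<times> Z)\<^sup>*"
    using exists_initial_scc assms(3) by metis
  then have "source_set V A Z"
    by (intro pred_closed_scc_is_source_set) (auto simp: strongly_connected_def)
  then obtain u where u: "u \<in> Z" "source V A u \<or> leaf V A u"
    using source_set_has_source_or_leaf[OF dg assms(2)] by blast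
  then have "u \<noteq> w" using assms(4,5) by blast
  then obtain n where "uadj A w n" "u \<in> branch A w n"
    using branch_cover[OF assms(1,3)] u(1) Z(2) by blast
  then show ?thesis using u Z(3) by (auto simp: branch_feeds_def)
qed

text \<open>If the branch at m does not feed w although m w is an arc, the initial strong component of
  the branch above m can only fail to be a source set of T because of an arc w m; hence that arc
  exists and m lies in the component.\<close>

lemma not_branch_feeds_imp_ancestors_reachable:
  assumes dt: "ditree V A" and leaves: "source_sets_have_leaves V A"
    and wm: "uadj A w m" and mw: "(m, w) \<in> A" and not_feeds: "\<not> branch_feeds V A w m"
  defines "R \<equiv> A \<inter> branch A w m \<times> branch A w m"
  shows "(w, m) \<in> A \<and> (\<forall>y. (y, m) \<in> R\<^sup>* \<longrightarrow> (m, y) \<in> R\<^sup>*)"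
proof -
  have dg: "digraph V A" using dt by (simp add: ditree_def)
  let ?C = "branch A w m"
  have "?C \<subseteq> V" using branch_subset[OF dg wm] .
  then have "finite ?C" using dg finite_subset by (auto simp: digraph_def)
  moreover have "R \<subseteq> ?C \<times> ?C" by (auto simp: R_def)
  ultimately obtain Z where Z: "Z \<noteq> {}" "Z \<subseteq> ?C" "\<forall>y\<in>Z. (y, m) \<in> R\<^sup>*" "pred_closed R Z"
    and Z_strong: "\<forall>y\<in>Z. \<forall>y'\<in>Z. (y, y') \<in> (R \<inter> Z \<times> Z)\<^sup>*"
    by (rule exists_initial_scc[OF _ _ branch_self])
  have R_Z: "R \<inter> Z \<times> Z = A \<inter> Z \<times> Z" using Z(2) by (auto simp: R_def)
  have "(w, m) \<in> A \<and> m \<in> Z"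
  proof (rule ccontr)
    assume no_back_arc: "\<not> ((w, m) \<in> A \<and> m \<in> Z)"
    have "pred_closed A Z"
      unfolding pred_closed_def
    proof (intro allI impI)
      fix a b assume ab: "(a, b) \<in> A" and "b \<in> Z"
      show "a \<in> Z"
      proof (cases "a \<in> ?C")
        case True
        then show ?thesis using ab \<open>b \<in> Z\<close> Z(2,4) by (auto simp: R_def pred_closed_def)
      next
        case False
        then have "a = w \<and> b = m"
          using branch_boundary[OF dt wm, of b a] ab \<open>b \<in> Z\<close> Z(2) by (auto simp: uadj_def)
        then show ?thesis using no_back_arc ab \<open>b \<in> Z\<close> by simp
      qed
    qed
    moreover have "strongly_connected V A Z"
      using Z(1,2) Z_strong \<open>?C \<subseteq> V\<close> unfolding strongly_connected_def R_Z by blast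
    ultimately have "source_set V A Z" by (intro pred_closed_scc_is_source_set)
    then obtain u where u: "u \<in> Z" "source V A u \<or> leaf V A u"
      using source_set_has_source_or_leaf[OF dg leaves] by blast
    have "(u, m) \<in> A\<^sup>*" using Z(3) u(1) rtrancl_mono[of R A] by (auto simp: R_def)
    then have "(u, w) \<in> A\<^sup>*" using mw by (rule rtrancl_into_rtrancl)
    then show False using not_feeds u Z(2) by (auto simp: branch_feeds_def)
  qed
  moreover have "(m, y) \<in> R\<^sup>*" if "(y, m) \<in> R\<^sup>*" for y
  proof -
    have "y \<in> Z" using pred_closed_rtrancl[OF Z(4) that] \<open>(w, m) \<in> A \<and> m \<in> Z\<close> by blast
    then have "(m, y) \<in> (R \<inter> Z \<times> Z)\<^sup>*" using Z_strong \<open>(w, m) \<in> A \<and> m \<in> Z\<close> by blast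
    then show ?thesis using rtrancl_mono[of "R \<inter> Z \<times> Z" R] by blast
  qed
  ultimately show ?thesis by blast
qed

text \<open>If neither direction is fed, both arcs between w and m exist, ancestors and descendants
  of m in its branch coincide, so this set is the whole branch, and a leaf of the branch feeds w.\<close>

lemma branch_feeds_either:
  assumes dt: "ditree V A" and leaves: "source_sets_have_leaves V A"
    and leaves': "source_sets_have_leaves V (A\<inverse>)" and wm: "uadj A w m"
  shows "branch_feeds V A w m \<or> branch_feeds V (A\<inverse>) w m"
proof (rule ccontr)
  assume "\<not> (branch_feeds V A w m \<or> branch_feeds V (A\<inverse>) w m)"
  then have not_feeds: "\<not> branch_feeds V A w m" "\<not> branch_feeds V (A\<inverse>) w m" by blast+
  let ?C = "branch A w m"
  define R where "R = A \<inter> ?C \<times> ?C"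
  have R_converse: "A\<inverse> \<inter> ?C \<times> ?C = R\<inverse>" by (auto simp: R_def)
  have dt': "ditree V (A\<inverse>)" using dt by simp
  have wm': "uadj (A\<inverse>) w m" using wm by simp
  note forward = not_branch_feeds_imp_ancestors_reachable[OF dt leaves wm _ not_feeds(1)]
  note backward = not_branch_feeds_imp_ancestors_reachable[OF dt' leaves' wm' _ not_feeds(2),
      unfolded branch_converse R_converse rtrancl_converse]
  have arcs: "(m, w) \<in> A" "(w, m) \<in> A"
    using forward backward wm by (auto simp: uadj_def)
  have anc_desc: "(y, m) \<in> R\<^sup>* \<longleftrightarrow> (m, y) \<in> R\<^sup>*" for y
    using forward[OF arcs(1)] backward arcs(2) by (auto simp: R_def)
  have branch_reachable: "(m, y) \<in> R\<^sup>*" if "y \<in> ?C" for y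
  proof -
    have "(m, y) \<in> (avoiding_edges A w)\<^sup>*" using that by (simp add: branch_def)
    then show ?thesis
    proof (induction rule: rtrancl_induct)
      case (step y y')
      have "y \<in> ?C" "y' \<in> ?C"
        using step.hyps by (auto simp: branch_def intro: rtrancl_into_rtrancl)
      moreover have "uadj A y y'" using step.hyps(2) by (simp add: avoiding_edges_def)
      ultimately have "(y, y') \<in> R \<or> (y', y) \<in> R" by (auto simp: R_def uadj_def)
      then show ?case
        using step.IH anc_desc by (meson rtrancl_into_rtrancl converse_rtrancl_into_rtrancl)
    qed simp
  qed
  obtain l where "l \<in> ?C" "leaf V A l" using branch_has_leaf[OF dt wm] by blast
  then have "(l, m) \<in> A\<^sup>*"
    using branch_reachable anc_desc rtrancl_mono[of R A] by (auto simp: R_def)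
  then have "(l, w) \<in> A\<^sup>*" using arcs(1) by (rule rtrancl_into_rtrancl)
  then show False using not_feeds(1) \<open>l \<in> ?C\<close> \<open>leaf V A l\<close> by (auto simp: branch_feeds_def)
qed

lemma non_leaf_other_neighbour:
  assumes "digraph V A" "\<not> leaf V A w" "uadj A w n"
  shows "\<exists>m. uadj A w m \<and> m \<noteq> n"
proof (rule ccontr)
  assume "\<not> (\<exists>m. uadj A w m \<and> m \<noteq> n)"
  moreover have "w \<in> V" "n \<in> V" using assms(1,3) by (auto simp: digraph_def uadj_def)
  ultimately have "{y \<in> V. uadj A w y} = {n}" using assms(3) by blast
  then show False using assms(2) \<open>w \<in> V\<close> by (simp add: leaf_def udegree_def)
qed

lemma interior_vertex_in_interval:
  assumes dt: "ditree V A" and leaves: "source_sets_have_leaves V A"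
    and leaves': "source_sets_have_leaves V (A\<inverse>)"
    and w: "w \<in> V" "w \<notin> extreme_vertices V A"
  shows "\<exists>u\<in>extreme_vertices V A. \<exists>v\<in>extreme_vertices V A. w \<in> interval A u v"
proof -
  have dg: "digraph V A" using dt by (simp add: ditree_def)
  have not_extreme: "\<not> sink V A w" "\<not> source V A w" "\<not> leaf V A w"
    using w by (auto simp: extreme_vertices_def)
  obtain n1 where n1: "uadj A w n1" "branch_feeds V A w n1"
    using exists_branch_feeds[OF dt leaves w(1) not_extreme(2,3)] by blast
  obtain n2 where n2: "uadj A w n2" "branch_feeds V (A\<inverse>) w n2"
    using exists_branch_feeds[of V "A\<inverse>" w] dt leaves' w(1) not_extreme(1,3) by auto
  obtain p q where pq: "uadj A w p" "uadj A w q" "p \<noteq> q"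
    and feeds: "branch_feeds V A w p" "branch_feeds V (A\<inverse>) w q"
  proof (cases "n1 = n2")
    case True
    obtain m where m: "uadj A w m" "m \<noteq> n1"
      using non_leaf_other_neighbour[OF dg not_extreme(3) n1(1)] by blast
    from branch_feeds_either[OF dt leaves leaves' m(1)] show ?thesis
      using that m n1 n2 True by blast
  qed (use that n1 n2 in blast)
  obtain u where u: "u \<in> branch A w p" "source V A u \<or> leaf V A u" "(u, w) \<in> A\<^sup>*"
    using feeds(1) by (auto simp: branch_feeds_def)
  obtain v where v: "v \<in> branch A w q" "sink V A v \<or> leaf V A v" "(w, v) \<in> A\<^sup>*"
    using feeds(2) by (auto simp: branch_feeds_converse)
  have "(u, v) \<in> A\<^sup>*" using u(3) v(3) by (rule rtrancl_trans)
  then obtain ys where ys: "shortest_path A u v ys" using shortest_path_exists by metis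
  have "v \<notin> branch A w p" using branch_disjoint[OF dt pq(1,2) _ v(1)] pq(3) by blast
  then have "w \<in> set ys"
    using dwalk_leaving_branch[OF dg pq(1)] ys u(1) by (auto simp: shortest_path_def dpath_def)
  then have "w \<in> interval A u v" using ys by (auto simp: interval_def)
  moreover have "u \<in> V" "v \<in> V" using branch_subset[OF dg] pq(1,2) u(1) v(1) by blast+
  ultimately show ?thesis using u(2) v(2) by (auto simp: extreme_vertices_def)
qed

theorem lemma3:
  fixes V :: "'a set" and A :: "('a \<times> 'a) set"
  assumes "ditree V A"
    and "\<And>X. source_set V A X \<Longrightarrow> card X \<ge> 2 \<Longrightarrow> \<exists>v\<in>X. leaf V A v"
    and "\<And>X. sink_set V A X \<Longrightarrow> card X \<ge> 2 \<Longrightarrow> \<exists>v\<in>X. leaf V A v"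
  shows "geodetic V A {v \<in> V. sink V A v \<or> source V A v \<or> leaf V A v}
    \<and> (\<forall>S'. geodetic V A S' \<longrightarrow>
          card {v \<in> V. sink V A v \<or> source V A v \<or> leaf V A v} \<le> card S')"
proof -
  let ?E = "extreme_vertices V A"
  have dg: "digraph V A" using assms(1) by (simp add: ditree_def)
  have leaves: "source_sets_have_leaves V A" "source_sets_have_leaves V (A\<inverse>)"
    using assms(2,3) by (auto simp: source_sets_have_leaves_def)
  have "interval_set A ?E \<subseteq> V"
    using interval_subset[OF dg] by (auto simp: interval_set_def extreme_vertices_def)
  moreover have "w \<in> interval_set A ?E" if "w \<in> V" for w
    using interval_refl[of w A] interior_vertex_in_interval[OF assms(1) leaves that]
    unfolding interval_set_def by (cases "w \<in> ?E") blast+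
  ultimately have "geodetic V A ?E" by (auto simp: geodetic_def extreme_vertices_def)
  moreover have "card ?E \<le> card S'" if "geodetic V A S'" for S'
  proof (rule card_mono)
    show "finite S'" using that dg finite_subset by (auto simp: geodetic_def digraph_def)
    show "?E \<subseteq> S'" using geodetic_contains_extreme_vertices[OF dg that] .
  qed
  ultimately show ?thesis unfolding extreme_vertices_def by blast
qed

end
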